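(* Let $K$ be a Noetherian unital commutative ring, let $A$ be a (not necessarily unital) commutative $K$-algebra such that $A\rtimes K$ is a finitely generated unital $K$-algebra, and let $s\in K$. Then the level morphism of pro-sets $$A^{(s^\infty)}\to\varprojlim\nolimits_n^{\mathrm{Pro}(\mathbf{Set})}s^nA,\qquad a\in A^{(s^n)}\mapsto s^na,$$ is an isomorphism in $\mathrm{Pro}(\mathbf{Set})$, where the right-hand side is the inverse system of ideals $\cdots\subseteq s^2A\subseteq sA\subseteq A$ with inclusions as transition maps. Moreover, the morphism of pro-sets $\varprojlim_n s^nA\to A_s$, $s^na\mapsto \frac{s^na}{1}$, into the constant pro-set $A_s$ (the localization) is a monomorphism in $\mathrm{Pro}(\mathbf{Set})$.
   Context: $A\rtimes K$ denotes $A\oplus K$ with product $(a,k)(a',k')=(aa'+ak'+a'k,kk')$. For $t\in K$ the homotope $A^{(t)}$ is the set $A$ with the product $a*b=tab$. The colocalization $A^{(s^\infty)}$ is the pro-object (inverse system) $\cdots\to A^{(s^2)}\to A^{(s)}\to A$ in $\mathrm{Pro}(\mathbf{Set})$ with transition maps $A^{(s^{n+1})}\to A^{(s^n)}$, $a\mapsto sa$. For a category $\mathbf C$, $\mathrm{Pro}(\mathbf C)$ has as objects contravariant functors $X\colon\mathbf I_X\to\mathbf C$ from small filtered categories, with $\mathrm{Hom}(X,Y)=\varprojlim_{j\in\mathbf I_Y}\varinjlim_{i\in\mathbf I_X}\mathbf C(X(i),Y(j))$; a level morphism is one given by compatible maps between the terms of inverse systems with the same index category. *)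

theory Defs
  imports Main "HOL.Modules"
begin

record ('i, 'x) pro_set =
  pleq :: "'i \<Rightarrow> 'i \<Rightarrow> bool"
  pobj :: "'i \<Rightarrow> 'x set"
  ptr  :: "'i \<Rightarrow> 'i \<Rightarrow> 'x \<Rightarrow> 'x"   \<comment> \<open>ptr i j : X j \<rightarrow> X i for i \<le> j\<close>

definition proset :: "('i, 'x) pro_set \<Rightarrow> bool" where
  "proset X \<longleftrightarrow>
     (\<forall>i. pleq X i i) \<and>
     (\<forall>i j k. pleq X i j \<longrightarrow> pleq X j k \<longrightarrow> pleq X i k) \<and>
     (\<forall>i j. \<exists>k. pleq X i k \<and> pleq X j k) \<and>
     (\<forall>i j. pleq X i j \<longrightarrow> (\<forall>x\<in>pobj X j. ptr X i j x \<in> pobj X i)) \<and>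
     (\<forall>i. \<forall>x\<in>pobj X i. ptr X i i x = x) \<and>
     (\<forall>i j k. pleq X i j \<longrightarrow> pleq X j k \<longrightarrow>
        (\<forall>x\<in>pobj X k. ptr X i j (ptr X j k x) = ptr X i k x))"

text \<open>A representative of an element of
  Hom(X,Y) = lim_j colim_i Set(X i, Y j): for each j an index phi j and a map
  X (phi j) \<rightarrow> Y j, compatible in the colimit.\<close>
definition pro_rep :: "('i, 'x) pro_set \<Rightarrow> ('j, 'y) pro_set \<Rightarrow>
    ('j \<Rightarrow> 'i) \<times> ('j \<Rightarrow> 'x \<Rightarrow> 'y) \<Rightarrow> bool" where
  "pro_rep X Y f \<longleftrightarrow> (case f of (\<phi>, h) \<Rightarrow>
     (\<forall>j. \<forall>x\<in>pobj X (\<phi> j). h j x \<in> pobj Y j) \<and>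
     (\<forall>j j'. pleq Y j j' \<longrightarrow>
        (\<exists>i. pleq X (\<phi> j) i \<and> pleq X (\<phi> j') i \<and>
             (\<forall>x\<in>pobj X i. ptr Y j j' (h j' (ptr X (\<phi> j') i x)) = h j (ptr X (\<phi> j) i x)))))"

text \<open>Equality of morphisms (equality in the colimit for each target index).\<close>
definition pro_eq :: "('i, 'x) pro_set \<Rightarrow>
    ('j \<Rightarrow> 'i) \<times> ('j \<Rightarrow> 'x \<Rightarrow> 'y) \<Rightarrow> ('j \<Rightarrow> 'i) \<times> ('j \<Rightarrow> 'x \<Rightarrow> 'y) \<Rightarrow> bool" where
  "pro_eq X f g \<longleftrightarrow> (case f of (\<phi>, h) \<Rightarrow> case g of (\<psi>, k) \<Rightarrow>
     (\<forall>j. \<exists>i. pleq X (\<phi> j) i \<and> pleq X (\<psi> j) i \<and>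
        (\<forall>x\<in>pobj X i. h j (ptr X (\<phi> j) i x) = k j (ptr X (\<psi> j) i x))))"

text \<open>pro_comp f g is "g after f" for f : X \<rightarrow> Y, g : Y \<rightarrow> Z.\<close>
definition pro_comp :: "('j \<Rightarrow> 'i) \<times> ('j \<Rightarrow> 'x \<Rightarrow> 'y) \<Rightarrow> ('l \<Rightarrow> 'j) \<times> ('l \<Rightarrow> 'y \<Rightarrow> 'z)
    \<Rightarrow> ('l \<Rightarrow> 'i) \<times> ('l \<Rightarrow> 'x \<Rightarrow> 'z)" where
  "pro_comp f g = (case f of (\<phi>, h) \<Rightarrow> case g of (\<psi>, k) \<Rightarrow>
     (\<phi> \<circ> \<psi>, \<lambda>l x. k l (h (\<psi> l) x)))"

definition pro_id :: "('i \<Rightarrow> 'i) \<times> ('i \<Rightarrow> 'x \<Rightarrow> 'x)" where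
  "pro_id = (\<lambda>i. i, \<lambda>i x. x)"

definition pro_iso :: "('i, 'x) pro_set \<Rightarrow> ('j, 'y) pro_set \<Rightarrow>
    ('j \<Rightarrow> 'i) \<times> ('j \<Rightarrow> 'x \<Rightarrow> 'y) \<Rightarrow> bool" where
  "pro_iso X Y f \<longleftrightarrow> pro_rep X Y f \<and>
     (\<exists>g. pro_rep Y X g \<and> pro_eq X (pro_comp f g) pro_id \<and> pro_eq Y (pro_comp g f) pro_id)"

text \<open>Monomorphism: left-cancellable against all pro-sets W whose index type is
  'w and whose element type is 'z (these type variables are universally
  quantified in any theorem using it).\<close>
definition pro_mono :: "('w \<times> 'z) itself \<Rightarrow> ('i, 'x) pro_set \<Rightarrow> ('j, 'y) pro_set \<Rightarrow>
    ('j \<Rightarrow> 'i) \<times> ('j \<Rightarrow> 'x \<Rightarrow> 'y) \<Rightarrow> bool" where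
  "pro_mono _ X Y f \<longleftrightarrow> pro_rep X Y f \<and>
     (\<forall>(W :: ('w, 'z) pro_set) (u :: ('i \<Rightarrow> 'w) \<times> ('i \<Rightarrow> 'z \<Rightarrow> 'x)) v.
        proset W \<longrightarrow> pro_rep W X u \<longrightarrow> pro_rep W X v \<longrightarrow>
        pro_eq W (pro_comp u f) (pro_comp v f) \<longrightarrow> pro_eq W u v)"

definition const_proset :: "'x set \<Rightarrow> (unit, 'x) pro_set" where
  "const_proset S = \<lparr>pleq = (\<lambda>_ _. True), pobj = (\<lambda>_. S), ptr = (\<lambda>_ _ x. x)\<rparr>"

definition is_ideal :: "'k::comm_ring_1 set \<Rightarrow> bool" where
  "is_ideal I \<longleftrightarrow> 0 \<in> I \<and> (\<forall>x\<in>I. \<forall>y\<in>I. x + y \<in> I) \<and> (\<forall>r. \<forall>x\<in>I. r * x \<in> I)"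

definition noetherian :: "'k::comm_ring_1 itself \<Rightarrow> bool" where
  "noetherian _ \<longleftrightarrow> (\<forall>C :: nat \<Rightarrow> 'k set. (\<forall>n. is_ideal (C n)) \<longrightarrow>
      (\<forall>n. C n \<subseteq> C (Suc n)) \<longrightarrow> (\<exists>N. \<forall>n\<ge>N. C n = C N))"

text \<open>Unital K-subalgebra of the unitization A \<rtimes> K (= A \<times> K) generated by S.\<close>
inductive_set gen_alg :: "('k::comm_ring_1 \<Rightarrow> 'a::comm_ring \<Rightarrow> 'a) \<Rightarrow> ('a \<times> 'k) set \<Rightarrow> ('a \<times> 'k) set"
  for smul :: "'k::comm_ring_1 \<Rightarrow> 'a::comm_ring \<Rightarrow> 'a" and S :: "('a \<times> 'k) set" where
  gen_base: "x \<in> S \<Longrightarrow> x \<in> gen_alg smul S"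
| gen_one: "(0, 1) \<in> gen_alg smul S"
| gen_add: "(a, k) \<in> gen_alg smul S \<Longrightarrow> (b, l) \<in> gen_alg smul S \<Longrightarrow> (a + b, k + l) \<in> gen_alg smul S"
| gen_mult: "(a, k) \<in> gen_alg smul S \<Longrightarrow> (b, l) \<in> gen_alg smul S \<Longrightarrow>
      (a * b + smul l a + smul k b, k * l) \<in> gen_alg smul S"
| gen_scal: "(a, k) \<in> gen_alg smul S \<Longrightarrow> (smul r a, r * k) \<in> gen_alg smul S"

definition fg_unitization :: "('k::comm_ring_1 \<Rightarrow> 'a::comm_ring \<Rightarrow> 'a) \<Rightarrow> bool" where
  "fg_unitization smul \<longleftrightarrow> (\<exists>S. finite S \<and> gen_alg smul S = UNIV)"

text \<open>Colocalization A^(s^\<infinity>): A^(s^n) at level n, transition a \<mapsto> s a.\<close>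
definition coloc :: "('k::comm_ring_1 \<Rightarrow> 'a::comm_ring \<Rightarrow> 'a) \<Rightarrow> 'k \<Rightarrow> (nat, 'a) pro_set" where
  "coloc smul s = \<lparr>pleq = (\<le>), pobj = (\<lambda>_. UNIV), ptr = (\<lambda>m n a. smul (s ^ (n - m)) a)\<rparr>"

definition ideal_tower :: "('k::comm_ring_1 \<Rightarrow> 'a::comm_ring \<Rightarrow> 'a) \<Rightarrow> 'k \<Rightarrow> (nat, 'a) pro_set" where
  "ideal_tower smul s = \<lparr>pleq = (\<le>), pobj = (\<lambda>n. range (smul (s ^ n))), ptr = (\<lambda>m n x. x)\<rparr>"

text \<open>Localization A_s: classes of pairs (a, n) standing for a / s^n.\<close>
definition loc_rel :: "('k::comm_ring_1 \<Rightarrow> 'a::comm_ring \<Rightarrow> 'a) \<Rightarrow> 'k \<Rightarrow> 'a \<times> nat \<Rightarrow> 'a \<times> nat \<Rightarrow> bool" where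
  "loc_rel smul s p q \<longleftrightarrow> (case p of (a, n) \<Rightarrow> case q of (b, m) \<Rightarrow>
     (\<exists>k. smul (s ^ (k + m)) a = smul (s ^ (k + n)) b))"

definition loc_class :: "('k::comm_ring_1 \<Rightarrow> 'a::comm_ring \<Rightarrow> 'a) \<Rightarrow> 'k \<Rightarrow> 'a \<Rightarrow> nat \<Rightarrow> ('a \<times> nat) set" where
  "loc_class smul s a n = {q. loc_rel smul s (a, n) q}"

definition loc_set :: "('k::comm_ring_1 \<Rightarrow> 'a::comm_ring \<Rightarrow> 'a) \<Rightarrow> 'k \<Rightarrow> ('a \<times> nat) set set" where
  "loc_set smul s = {loc_class smul s a n | a n. True}"

end

theory Submission
  imports Defs "HOL-Algebra.Ring"
begin

text \<open>The unitization A \<rtimes> K is a finitely generated algebra over the Noetherian ring K, hence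
  Noetherian by Hilbert's basis theorem, proved by adjoining one generator at a time and comparing
  ideals through their leading coefficients. So the ascending chain of s^n-torsion ideals of A
  stabilizes: some power s^c kills all s-power torsion of A. Consequently s^(n+c) a \<mapsto> s^c a is a
  well defined map s^(n+c) A \<rightarrow> A^(s^n), and it inverts the level morphism in Pro(Set); and
  s^(n+c) A \<rightarrow> A_s is injective, which makes the tower a monomorphism into A_s.\<close>

section \<open>Hilbert's basis theorem for one adjoined element\<close>

text \<open>Rings with total carrier suffice here (the unitization is one) and spare all membership side
  conditions.\<close>
locale total_cring = cring R for R (structure) +
  assumes carrier_eq_UNIV [simp]: "carrier R = UNIV"
begin

lemmas ring_eqs = a_ac m_ac r_distr l_distr minus_add l_minus r_minus

definition is_subring :: "'a set \<Rightarrow> bool" where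
  "is_subring S \<longleftrightarrow> \<zero> \<in> S \<and> \<one> \<in> S \<and> (\<forall>x\<in>S. \<ominus> x \<in> S) \<and> (\<forall>x\<in>S. \<forall>y\<in>S. x \<otimes> y \<in> S \<and> x \<oplus> y \<in> S)"

lemma is_subringD:
  assumes "is_subring S"
  shows "\<zero> \<in> S" "\<one> \<in> S" "x \<in> S \<Longrightarrow> \<ominus> x \<in> S" "x \<in> S \<Longrightarrow> y \<in> S \<Longrightarrow> x \<otimes> y \<in> S"
    "x \<in> S \<Longrightarrow> y \<in> S \<Longrightarrow> x \<oplus> y \<in> S"
  using assms by (auto simp: is_subring_def)

definition subring_ideal :: "'a set \<Rightarrow> 'a set \<Rightarrow> bool" where
  "subring_ideal S I \<longleftrightarrow> I \<subseteq> S \<and> \<zero> \<in> I \<and> (\<forall>x\<in>I. \<forall>y\<in>I. x \<oplus> y \<in> I) \<and> (\<forall>x\<in>I. \<ominus> x \<in> I)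
     \<and> (\<forall>r\<in>S. \<forall>x\<in>I. r \<otimes> x \<in> I)"

lemma subring_idealD:
  assumes "subring_ideal S I"
  shows "I \<subseteq> S" "\<zero> \<in> I" "x \<in> I \<Longrightarrow> y \<in> I \<Longrightarrow> x \<oplus> y \<in> I" "x \<in> I \<Longrightarrow> \<ominus> x \<in> I"
    "r \<in> S \<Longrightarrow> x \<in> I \<Longrightarrow> r \<otimes> x \<in> I"
  using assms by (auto simp: subring_ideal_def)

definition noetherian_subring :: "'a set \<Rightarrow> bool" where
  "noetherian_subring S \<longleftrightarrow> (\<forall>C. (\<forall>n. subring_ideal S (C n)) \<longrightarrow> (\<forall>n. C n \<subseteq> C (Suc n)) \<longrightarrow>
     (\<exists>N. \<forall>n\<ge>N. C n = C N))"

lemma noetherian_subringD: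
  "noetherian_subring S \<Longrightarrow> (\<And>n. subring_ideal S (C n)) \<Longrightarrow> (\<And>n. C n \<subseteq> C (Suc n)) \<Longrightarrow>
    \<exists>N. \<forall>n\<ge>N. C n = C N"
  unfolding noetherian_subring_def by blast

text \<open>The values at t of the polynomials of degree < d with coefficients in S.\<close>
fun poly_below :: "'a set \<Rightarrow> 'a \<Rightarrow> nat \<Rightarrow> 'a set" where
  "poly_below S t 0 = {\<zero>}"
| "poly_below S t (Suc d) = {c \<otimes> t [^] d \<oplus> q | c q. c \<in> S \<and> q \<in> poly_below S t d}"

definition adjoin :: "'a set \<Rightarrow> 'a \<Rightarrow> 'a set" where
  "adjoin S t = (\<Union>d. poly_below S t d)"

definition lead_coeffs :: "'a set \<Rightarrow> 'a \<Rightarrow> 'a set \<Rightarrow> nat \<Rightarrow> 'a set" where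
  "lead_coeffs S t J d = {c \<in> S. \<exists>q \<in> poly_below S t d. c \<otimes> t [^] d \<oplus> q \<in> J}"

lemma poly_below_SucI: "c \<in> S \<Longrightarrow> q \<in> poly_below S t d \<Longrightarrow> c \<otimes> t [^] d \<oplus> q \<in> poly_below S t (Suc d)"
  by auto

lemma lead_coeffs_subset: "I \<subseteq> J \<Longrightarrow> lead_coeffs S t I d \<subseteq> lead_coeffs S t J d"
  unfolding lead_coeffs_def by blast

context
  fixes S :: "'a set" and t :: 'a
  assumes S: "is_subring S"
begin

lemma poly_below_zero: "\<zero> \<in> poly_below S t d"
proof (induction d)
  case (Suc d)
  have "\<zero> = \<zero> \<otimes> t [^] d \<oplus> \<zero>" by simp
  with Suc show ?case using poly_below_SucI is_subringD(1)[OF S] by metis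
qed simp

lemma poly_below_add: "x \<in> poly_below S t d \<Longrightarrow> y \<in> poly_below S t d \<Longrightarrow> x \<oplus> y \<in> poly_below S t d"
proof (induction d arbitrary: x y)
  case (Suc d)
  then obtain c q c' q' where x: "x = c \<otimes> t [^] d \<oplus> q" "c \<in> S" "q \<in> poly_below S t d"
    and y: "y = c' \<otimes> t [^] d \<oplus> q'" "c' \<in> S" "q' \<in> poly_below S t d" by auto
  have "x \<oplus> y = (c \<oplus> c') \<otimes> t [^] d \<oplus> (q \<oplus> q')" unfolding x y by (simp add: ring_eqs)
  then show ?case using Suc.IH x y poly_below_SucI is_subringD(5)[OF S] by metis
qed simp

lemma poly_below_uminus: "x \<in> poly_below S t d \<Longrightarrow> \<ominus> x \<in> poly_below S t d"
proof (induction d arbitrary: x)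
  case (Suc d)
  then obtain c q where x: "x = c \<otimes> t [^] d \<oplus> q" "c \<in> S" "q \<in> poly_below S t d" by auto
  have "\<ominus> x = (\<ominus> c) \<otimes> t [^] d \<oplus> (\<ominus> q)" unfolding x by (simp add: ring_eqs)
  then show ?case using Suc.IH x poly_below_SucI is_subringD(3)[OF S] by metis
qed simp

lemma poly_below_scale: "r \<in> S \<Longrightarrow> x \<in> poly_below S t d \<Longrightarrow> r \<otimes> x \<in> poly_below S t d"
proof (induction d arbitrary: x)
  case (Suc d)
  then obtain c q where x: "x = c \<otimes> t [^] d \<oplus> q" "c \<in> S" "q \<in> poly_below S t d" by auto
  have "r \<otimes> x = (r \<otimes> c) \<otimes> t [^] d \<oplus> (r \<otimes> q)" unfolding x by (simp add: ring_eqs)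
  then show ?case using Suc x poly_below_SucI is_subringD(4)[OF S] by metis
qed simp

lemma poly_below_Suc_mono: "poly_below S t d \<subseteq> poly_below S t (Suc d)"
proof
  fix x assume "x \<in> poly_below S t d"
  moreover have "x = \<zero> \<otimes> t [^] d \<oplus> x" by simp
  ultimately show "x \<in> poly_below S t (Suc d)" using poly_below_SucI is_subringD(1)[OF S] by metis
qed

lemma poly_below_mono: "d \<le> e \<Longrightarrow> poly_below S t d \<subseteq> poly_below S t e"
  by (induction e rule: dec_induct) (use poly_below_Suc_mono in blast)+

lemma poly_below_mult_t: "x \<in> poly_below S t d \<Longrightarrow> t \<otimes> x \<in> poly_below S t (Suc d)"
proof (induction d arbitrary: x)
  case 0
  then have "t \<otimes> x = \<zero>" by simp
  with poly_below_zero show ?case by metis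
next
  case (Suc d)
  then obtain c q where x: "x = c \<otimes> t [^] d \<oplus> q" "c \<in> S" "q \<in> poly_below S t d" by auto
  have "t \<otimes> x = c \<otimes> t [^] Suc d \<oplus> t \<otimes> q" unfolding x nat_pow_Suc by (simp add: ring_eqs)
  then show ?case using Suc.IH x poly_below_SucI by metis
qed

lemma poly_below_mult_t_pow: "x \<in> poly_below S t d \<Longrightarrow> t [^] k \<otimes> x \<in> poly_below S t (d + k)"
proof (induction k)
  case (Suc k)
  have "t [^] Suc k \<otimes> x = t \<otimes> (t [^] k \<otimes> x)" unfolding nat_pow_Suc by (simp add: ring_eqs)
  then show ?case using poly_below_mult_t[OF Suc.IH[OF Suc.prems]] by simp
qed simp

lemma poly_below_mult:
  "x \<in> poly_below S t d \<Longrightarrow> y \<in> poly_below S t e \<Longrightarrow> x \<otimes> y \<in> poly_below S t (d + e)"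
proof (induction e arbitrary: y)
  case 0
  then show ?case using poly_below_zero by simp
next
  case (Suc e)
  then obtain c q where y: "y = c \<otimes> t [^] e \<oplus> q" "c \<in> S" "q \<in> poly_below S t e" by auto
  have "x \<otimes> y = c \<otimes> (t [^] e \<otimes> x) \<oplus> x \<otimes> q" unfolding y by (simp add: ring_eqs)
  moreover have "c \<otimes> (t [^] e \<otimes> x) \<in> poly_below S t (Suc (d + e))"
    using poly_below_scale[OF y(2) poly_below_mult_t_pow[OF Suc.prems(1)]] poly_below_Suc_mono by blast
  moreover have "x \<otimes> q \<in> poly_below S t (Suc (d + e))"
    using Suc.IH[OF Suc.prems(1) y(3)] poly_below_Suc_mono by blast
  ultimately show ?case unfolding add_Suc_right using poly_below_add by metis
qed

lemma poly_below_const: "c \<in> S \<Longrightarrow> c \<in> poly_below S t 1"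
  using poly_below_SucI[of c S \<zero> t 0] by simp

lemma is_subring_adjoin: "is_subring (adjoin S t)"
  unfolding is_subring_def
proof (intro conjI ballI)
  show "\<zero> \<in> adjoin S t"
    unfolding adjoin_def using poly_below_zero by blast
  show "\<one> \<in> adjoin S t"
    unfolding adjoin_def using poly_below_const is_subringD(2)[OF S] by blast
  show "\<ominus> x \<in> adjoin S t" if "x \<in> adjoin S t" for x
    using that poly_below_uminus unfolding adjoin_def by blast
  fix x y assume "x \<in> adjoin S t" "y \<in> adjoin S t"
  then obtain d e where "x \<in> poly_below S t d" "y \<in> poly_below S t e" unfolding adjoin_def by blast
  then have "x \<in> poly_below S t (d + e)" "y \<in> poly_below S t (d + e)" "x \<otimes> y \<in> poly_below S t (d + e)"
    using poly_below_mono[of d "d + e"] poly_below_mono[of e "d + e"] poly_below_mult by auto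
  then show "x \<otimes> y \<in> adjoin S t" "x \<oplus> y \<in> adjoin S t"
    unfolding adjoin_def using poly_below_add by blast+
qed

lemma subset_adjoin: "S \<subseteq> adjoin S t"
  unfolding adjoin_def using poly_below_const by blast

lemma t_in_adjoin: "t \<in> adjoin S t"
proof -
  have "t \<otimes> \<one> \<in> poly_below S t (Suc 1)"
    using poly_below_mult_t[OF poly_below_const[OF is_subringD(2)[OF S]]] .
  then have "t \<in> poly_below S t (Suc 1)" by (metis r_one UNIV_I carrier_eq_UNIV)
  then show ?thesis unfolding adjoin_def by blast
qed

context
  fixes J
  assumes J: "subring_ideal (adjoin S t) J"
begin

lemma subring_ideal_lead_coeffs: "subring_ideal S (lead_coeffs S t J d)"
proof -
  have "\<zero> \<otimes> t [^] d \<oplus> \<zero> \<in> J" using subring_idealD(2)[OF J] by simp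
  then have zero: "\<zero> \<in> lead_coeffs S t J d"
    unfolding lead_coeffs_def using poly_below_zero is_subringD(1)[OF S] by blast
  have add: "x \<oplus> y \<in> lead_coeffs S t J d" and uminus: "\<ominus> x \<in> lead_coeffs S t J d"
    if x: "x \<in> lead_coeffs S t J d" and y: "y \<in> lead_coeffs S t J d" for x y
  proof -
    obtain q where q: "x \<in> S" "q \<in> poly_below S t d" "x \<otimes> t [^] d \<oplus> q \<in> J"
      using x unfolding lead_coeffs_def by blast
    obtain q' where q': "y \<in> S" "q' \<in> poly_below S t d" "y \<otimes> t [^] d \<oplus> q' \<in> J"
      using y unfolding lead_coeffs_def by blast
    have "(x \<oplus> y) \<otimes> t [^] d \<oplus> (q \<oplus> q') = (x \<otimes> t [^] d \<oplus> q) \<oplus> (y \<otimes> t [^] d \<oplus> q')"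
      "(\<ominus> x) \<otimes> t [^] d \<oplus> (\<ominus> q) = \<ominus> (x \<otimes> t [^] d \<oplus> q)"
      by (simp_all add: ring_eqs)
    then have "(x \<oplus> y) \<otimes> t [^] d \<oplus> (q \<oplus> q') \<in> J" "(\<ominus> x) \<otimes> t [^] d \<oplus> (\<ominus> q) \<in> J"
      using subring_idealD(3,4)[OF J] q(3) q'(3) by simp_all
    then show "x \<oplus> y \<in> lead_coeffs S t J d" "\<ominus> x \<in> lead_coeffs S t J d"
      unfolding lead_coeffs_def using q q' is_subringD(3,5)[OF S] poly_below_add poly_below_uminus by blast+
  qed
  have scale: "r \<otimes> x \<in> lead_coeffs S t J d" if r: "r \<in> S" and x: "x \<in> lead_coeffs S t J d" for r x
  proof -
    obtain q where q: "x \<in> S" "q \<in> poly_below S t d" "x \<otimes> t [^] d \<oplus> q \<in> J"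
      using x unfolding lead_coeffs_def by blast
    have "(r \<otimes> x) \<otimes> t [^] d \<oplus> (r \<otimes> q) = r \<otimes> (x \<otimes> t [^] d \<oplus> q)" by (simp add: ring_eqs)
    then have "(r \<otimes> x) \<otimes> t [^] d \<oplus> (r \<otimes> q) \<in> J"
      using subring_idealD(5)[OF J _ q(3)] subset_adjoin r by auto
    then show ?thesis
      unfolding lead_coeffs_def using q r is_subringD(4)[OF S] poly_below_scale by blast
  qed
  show ?thesis
    unfolding subring_ideal_def lead_coeffs_def
    using zero add uminus scale by (auto simp: lead_coeffs_def)
qed

lemma lead_coeffs_Suc_mono: "lead_coeffs S t J d \<subseteq> lead_coeffs S t J (Suc d)"
proof
  fix c assume "c \<in> lead_coeffs S t J d"
  then obtain q where q: "c \<in> S" "q \<in> poly_below S t d" "c \<otimes> t [^] d \<oplus> q \<in> J"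
    unfolding lead_coeffs_def by auto
  have "c \<otimes> t [^] Suc d \<oplus> t \<otimes> q = t \<otimes> (c \<otimes> t [^] d \<oplus> q)"
    unfolding nat_pow_Suc by (simp add: ring_eqs)
  also have "\<dots> \<in> J" using subring_idealD(5)[OF J t_in_adjoin q(3)] .
  finally show "c \<in> lead_coeffs S t J (Suc d)"
    unfolding lead_coeffs_def using q(1) poly_below_mult_t[OF q(2)] by blast
qed

lemma lead_coeffs_mono: "d \<le> e \<Longrightarrow> lead_coeffs S t J d \<subseteq> lead_coeffs S t J e"
  by (induction e rule: dec_induct) (use lead_coeffs_Suc_mono in blast)+

end

text \<open>An element of J of degree \<le> d shares its leading coefficient with some element of I, and
  their difference has smaller degree.\<close>
lemma ideal_eq_if_lead_coeffs_eq:
  assumes I: "subring_ideal (adjoin S t) I" and J: "subring_ideal (adjoin S t) J" and "I \<subseteq> J"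
    and lead: "\<And>d. lead_coeffs S t J d \<subseteq> lead_coeffs S t I d"
  shows "I = J"
proof -
  have "f \<in> I" if "f \<in> J" "f \<in> poly_below S t d" for f d
    using that
  proof (induction d arbitrary: f)
    case 0
    then show ?case using subring_idealD(2)[OF I] by simp
  next
    case (Suc d)
    then obtain c q where f: "f = c \<otimes> t [^] d \<oplus> q" "c \<in> S" "q \<in> poly_below S t d" by auto
    then have "c \<in> lead_coeffs S t J d" unfolding lead_coeffs_def using Suc.prems(1) by auto
    then obtain q' where q': "q' \<in> poly_below S t d" "c \<otimes> t [^] d \<oplus> q' \<in> I"
      using lead unfolding lead_coeffs_def by blast
    define g where "g = c \<otimes> t [^] d \<oplus> q'"
    have "f \<oplus> \<ominus> g \<in> J"
      using subring_idealD(3,4)[OF J] Suc.prems(1) q'(2) \<open>I \<subseteq> J\<close> g_def by blast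
    moreover have "f \<oplus> \<ominus> g = q \<oplus> \<ominus> q'" unfolding f(1) g_def by (simp add: ring_eqs r_neg)
    then have "f \<oplus> \<ominus> g \<in> poly_below S t d" using poly_below_add poly_below_uminus f(3) q'(1) by simp
    ultimately have "f \<oplus> \<ominus> g \<in> I" by (rule Suc.IH)
    then have "(f \<oplus> \<ominus> g) \<oplus> g \<in> I" using subring_idealD(3)[OF I] q'(2) g_def by blast
    then show "f \<in> I" by (simp add: ring_eqs r_neg)
  qed
  then have "J \<subseteq> I" using subring_idealD(1)[OF J] unfolding adjoin_def by blast
  with \<open>I \<subseteq> J\<close> show ?thesis by blast
qed

end

text \<open>Take N beyond the stabilization of the diagonal M n n and of the finitely many columns
  below it; the columns above the diagonal index are squeezed by the diagonal.\<close>
lemma noetherian_subring_double_chain: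
  fixes M :: "nat \<Rightarrow> nat \<Rightarrow> 'a set"
  assumes S: "noetherian_subring S"
    and ideal: "\<And>n d. subring_ideal S (M n d)"
    and mono_n: "\<And>n m d. n \<le> m \<Longrightarrow> M n d \<subseteq> M m d"
    and mono_d: "\<And>n d e. d \<le> e \<Longrightarrow> M n d \<subseteq> M n e"
  obtains N where "\<And>n d. N \<le> n \<Longrightarrow> M n d = M N d"
proof -
  have "M n n \<subseteq> M (Suc n) (Suc n)" for n
    using mono_n[of n "Suc n" n] mono_d[of n "Suc n" "Suc n"] by auto
  then obtain p where p: "\<And>n. p \<le> n \<Longrightarrow> M n n = M p p"
    using noetherian_subringD[OF S, of "\<lambda>n. M n n"] ideal by blast
  have "\<exists>K. \<forall>n\<ge>K. M n d = M K d" for d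
    using noetherian_subringD[OF S, of "\<lambda>n. M n d"] ideal mono_n by simp
  then obtain K where K: "\<And>d n. K d \<le> n \<Longrightarrow> M n d = M (K d) d" by metis
  define N where "N = Max (insert p (K ` {..<p}))"
  have "p \<le> N" and K_le: "\<And>d. d < p \<Longrightarrow> K d \<le> N" unfolding N_def by auto
  have "M n d = M N d" if "N \<le> n" for n d
  proof (cases "d < p")
    case True
    then show ?thesis using K[of d n] K[of d N] K_le[OF True] that by simp
  next
    case False
    have "M n d \<subseteq> M (max n d) (max n d)" using mono_n[of n "max n d" d] mono_d[of d "max n d"] by auto
    also have "\<dots> = M p p" using False by (intro p) simp
    also have "\<dots> \<subseteq> M N d" using mono_n[OF \<open>p \<le> N\<close>, of p] mono_d[of p d N] False by auto
    finally show ?thesis using mono_n[OF that, of d] by blast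
  qed
  then show ?thesis by (rule that)
qed

theorem noetherian_subring_adjoin:
  assumes S: "is_subring S" "noetherian_subring S"
  shows "noetherian_subring (adjoin S t)"
  unfolding noetherian_subring_def
proof (intro allI impI)
  fix C assume C: "\<forall>n. subring_ideal (adjoin S t) (C n)" and mono: "\<forall>n. C n \<subseteq> C (Suc n)"
  have C_mono: "n \<le> m \<Longrightarrow> C n \<subseteq> C m" for n m by (rule lift_Suc_mono_le[of C]) (use mono in auto)
  obtain N where N: "\<And>n d. N \<le> n \<Longrightarrow> lead_coeffs S t (C n) d = lead_coeffs S t (C N) d"
  proof (rule noetherian_subring_double_chain[OF S(2), of "\<lambda>n. lead_coeffs S t (C n)"])
    show "subring_ideal S (lead_coeffs S t (C n) d)" for n d
      using subring_ideal_lead_coeffs[OF S(1)] C by blast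
    show "lead_coeffs S t (C n) d \<subseteq> lead_coeffs S t (C m) d" if "n \<le> m" for n m d
      using lead_coeffs_subset C_mono[OF that] by blast
    show "lead_coeffs S t (C n) d \<subseteq> lead_coeffs S t (C n) e" if "d \<le> e" for n d e
      using lead_coeffs_mono[OF S(1) _ that] C by blast
  qed blast
  have "C n = C N" if "N \<le> n" for n
    using ideal_eq_if_lead_coeffs_eq[OF S(1)] C C_mono[OF that] N[OF that] by blast
  then show "\<exists>N. \<forall>n\<ge>N. C n = C N" by blast
qed

lemma noetherian_subring_extend_finite:
  assumes "is_subring S" "noetherian_subring S" "finite G"
  obtains Q where "is_subring Q" "noetherian_subring Q" "S \<subseteq> Q" "G \<subseteq> Q"
proof -
  have "\<exists>Q. is_subring Q \<and> noetherian_subring Q \<and> S \<subseteq> Q \<and> G \<subseteq> Q"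
    using \<open>finite G\<close>
  proof (induction G rule: finite_induct)
    case empty
    then show ?case using assms by blast
  next
    case (insert x G)
    then obtain Q where "is_subring Q" "noetherian_subring Q" "S \<subseteq> Q" "G \<subseteq> Q" by blast
    then show ?case
      using is_subring_adjoin[of Q x] noetherian_subring_adjoin[of Q x] subset_adjoin[of Q x] t_in_adjoin[of Q x]
      by blast
  qed
  then show ?thesis using that by blast
qed

end

section \<open>The unitization and bounded s-power torsion\<close>

definition power_torsion_bound :: "('k::comm_ring_1 \<Rightarrow> 'a::ab_group_add \<Rightarrow> 'a) \<Rightarrow> 'k \<Rightarrow> nat \<Rightarrow> bool" where
  "power_torsion_bound smul s c \<longleftrightarrow> (\<forall>m a. smul (s ^ m) a = 0 \<longrightarrow> smul (s ^ c) a = 0)"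

lemma (in module) power_torsion_bound_cancel:
  assumes "power_torsion_bound scale s c" and "scale (s ^ m) a = scale (s ^ m) b"
  shows "scale (s ^ c) a = scale (s ^ c) b"
  using assms unfolding power_torsion_bound_def by (metis scale_right_diff_distrib right_minus_eq)

locale nonunital_algebra = module smul for smul :: "'k::comm_ring_1 \<Rightarrow> 'a::comm_ring \<Rightarrow> 'a" +
  assumes scale_mult_left: "smul k (a * b) = smul k a * b"
begin

lemma scale_mult_right: "smul k (a * b) = a * smul k b"
  using scale_mult_left[of k b a] by (simp add: mult.commute)

definition unitization :: "('a \<times> 'k) ring" where
  "unitization = \<lparr>carrier = UNIV,
     mult = (\<lambda>x y. (fst x * fst y + smul (snd y) (fst x) + smul (snd x) (fst y), snd x * snd y)),
     one = (0, 1), zero = (0, 0), add = (\<lambda>x y. (fst x + fst y, snd x + snd y))\<rparr>"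

lemma unitization_simps [simp]:
  "carrier unitization = UNIV"
  "x \<oplus>\<^bsub>unitization\<^esub> y = (fst x + fst y, snd x + snd y)"
  "x \<otimes>\<^bsub>unitization\<^esub> y = (fst x * fst y + smul (snd y) (fst x) + smul (snd x) (fst y), snd x * snd y)"
  "\<zero>\<^bsub>unitization\<^esub> = (0, 0)"
  "\<one>\<^bsub>unitization\<^esub> = (0, 1)"
  by (simp_all add: unitization_def)

sublocale U: total_cring unitization
proof -
  note scale_eqs = scale_mult_left[symmetric] scale_mult_right[symmetric] scale_right_distrib scale_left_distrib
  have "cring unitization"
  proof (rule cringI)
    show "abelian_group unitization"
      by (rule abelian_groupI) (auto simp: algebra_simps, (metis add.right_inverse)+)
    show "comm_monoid unitization"
      by (rule comm_monoidI) (auto simp: scale_eqs algebra_simps)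
  qed (auto simp: scale_eqs algebra_simps)
  then show "total_cring unitization"
    by (intro total_cring.intro) (simp_all add: total_cring_axioms_def)
qed

lemma unitization_minus [simp]: "\<ominus>\<^bsub>unitization\<^esub> x = (- fst x, - snd x)"
  by (rule U.minus_equality) auto

definition scalars :: "('a \<times> 'k) set" where
  "scalars = range (\<lambda>r. (0, r))"

lemma is_subring_scalars: "U.is_subring scalars"
  unfolding U.is_subring_def scalars_def by auto

lemma noetherian_scalars:
  assumes "noetherian TYPE('k)"
  shows "U.noetherian_subring scalars"
  unfolding U.noetherian_subring_def
proof (intro allI impI)
  fix C assume C: "\<forall>n. U.subring_ideal scalars (C n)" and mono: "\<forall>n. C n \<subseteq> C (Suc n)"
  define D where "D n = snd ` C n" for n
  have C_eq: "C n = (\<lambda>r. (0, r)) ` D n" for n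
  proof -
    have "C n \<subseteq> scalars" using U.subring_idealD(1) C by blast
    then show ?thesis unfolding D_def scalars_def by force
  qed
  have "is_ideal (D n)" for n
  proof -
    have I: "U.subring_ideal scalars (C n)" using C by blast
    have mem: "(0, x) \<in> C n" if "x \<in> D n" for x using that C_eq by blast
    have "0 \<in> D n"
      using U.subring_idealD(2)[OF I] unfolding D_def by force
    moreover have "x + y \<in> D n" if "x \<in> D n" "y \<in> D n" for x y
      using U.subring_idealD(3)[OF I mem[OF that(1)] mem[OF that(2)]] unfolding D_def by force
    moreover have "r * x \<in> D n" if "x \<in> D n" for r x
      using U.subring_idealD(5)[OF I _ mem[OF that], of "(0, r)"] unfolding D_def scalars_def by force
    ultimately show ?thesis unfolding is_ideal_def by blast
  qed
  moreover have "D n \<subseteq> D (Suc n)" for n using mono unfolding D_def by blast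
  ultimately obtain N where "\<forall>n\<ge>N. D n = D N"
    using assms unfolding noetherian_def by blast
  then show "\<exists>N. \<forall>n\<ge>N. C n = C N" using C_eq by metis
qed

lemma gen_alg_subset_subring:
  assumes Q: "U.is_subring Q" and "scalars \<subseteq> Q" "G \<subseteq> Q"
  shows "gen_alg smul G \<subseteq> Q"
proof
  fix x assume "x \<in> gen_alg smul G"
  then show "x \<in> Q"
  proof (induction rule: gen_alg.induct)
    case (gen_base x)
    then show ?case using assms(3) by blast
  next
    case gen_one
    then show ?case using U.is_subringD(2)[OF Q] by simp
  next
    case (gen_add a k b l)
    then show ?case using U.is_subringD(5)[OF Q, of "(a, k)" "(b, l)"] by simp
  next
    case (gen_mult a k b l)
    then show ?case using U.is_subringD(4)[OF Q, of "(a, k)" "(b, l)"] by simp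
  next
    case (gen_scal a k r)
    moreover have "(0, r) \<in> Q" using assms(2) unfolding scalars_def by blast
    ultimately show ?case using U.is_subringD(4)[OF Q, of "(0, r)" "(a, k)"] by simp
  qed
qed

theorem noetherian_unitization:
  assumes "noetherian TYPE('k)" and "fg_unitization smul"
  shows "U.noetherian_subring UNIV"
proof -
  obtain G where G: "finite G" "gen_alg smul G = UNIV"
    using assms(2) unfolding fg_unitization_def by blast
  obtain Q where "U.is_subring Q" "U.noetherian_subring Q" "scalars \<subseteq> Q" "G \<subseteq> Q"
    using U.noetherian_subring_extend_finite[OF is_subring_scalars noetherian_scalars[OF assms(1)] G(1)] .
  then have "Q = UNIV" using gen_alg_subset_subring G(2) by blast
  with \<open>U.noetherian_subring Q\<close> show ?thesis by simp
qed

theorem power_torsion_bounded: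
  assumes "noetherian TYPE('k)" and "fg_unitization smul"
  obtains c where "power_torsion_bound smul s c"
proof -
  define T :: "nat \<Rightarrow> ('a \<times> 'k) set" where "T n = {x. snd x = 0 \<and> smul (s ^ n) (fst x) = 0}" for n
  have "smul (s ^ n) (b * a + smul 0 b + smul l a) = 0" if "smul (s ^ n) a = 0" for n a b l
  proof -
    have "smul (s ^ n) (smul l a) = smul l (smul (s ^ n) a)" by (rule scale_left_commute)
    with that show ?thesis by (simp add: scale_right_distrib scale_mult_right del: scale_scale)
  qed
  then have "U.subring_ideal UNIV (T n)" for n
    unfolding U.subring_ideal_def T_def by (auto simp: scale_right_distrib)
  moreover have "T n \<subseteq> T (Suc n)" for n
    unfolding T_def by (auto simp flip: scale_scale)
  ultimately obtain c where c: "\<forall>n\<ge>c. T n = T c"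
    using U.noetherian_subringD[OF noetherian_unitization[OF assms]] by blast
  have "smul (s ^ c) a = 0" if "smul (s ^ m) a = 0" for m a
  proof (cases "m \<le> c")
    case True
    then have "smul (s ^ c) a = smul (s ^ (c - m)) (smul (s ^ m) a)" by (simp add: power_add[symmetric])
    with that show ?thesis by simp
  next
    case False
    then have "(a, 0) \<in> T c" using c that unfolding T_def by (metis (mono_tags) mem_Collect_eq nat_le_linear fst_conv snd_conv)
    then show ?thesis unfolding T_def by simp
  qed
  then show ?thesis using that unfolding power_torsion_bound_def by blast
qed

end

section \<open>Pro-sets\<close>

lemma proset_ptr_comp:
  assumes "proset X" "pleq X i j" "pleq X j k" "x \<in> pobj X k"
  shows "ptr X i j (ptr X j k x) = ptr X i k x"
  using assms unfolding proset_def by blast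

lemma proset_ptr_in: "proset X \<Longrightarrow> pleq X i j \<Longrightarrow> x \<in> pobj X j \<Longrightarrow> ptr X i j x \<in> pobj X i"
  unfolding proset_def by blast

lemma proset_trans: "proset X \<Longrightarrow> pleq X i j \<Longrightarrow> pleq X j k \<Longrightarrow> pleq X i k"
  unfolding proset_def by blast

lemma proset_finite_upper_bound:
  assumes "proset X" "finite F"
  obtains k where "\<And>i. i \<in> F \<Longrightarrow> pleq X i k"
proof -
  have "\<exists>k. \<forall>i\<in>F. pleq X i k"
    using \<open>finite F\<close>
  proof (induction F rule: finite_induct)
    case (insert j F)
    then obtain k where "\<forall>i\<in>F. pleq X i k" by blast
    moreover obtain k' where "pleq X j k'" "pleq X k k'"
      using \<open>proset X\<close> unfolding proset_def by blast
    ultimately show ?case using proset_trans[OF \<open>proset X\<close>] by blast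
  qed simp
  then show ?thesis using that by blast
qed

lemma pro_rep_in: "pro_rep X Y (\<phi>, h) \<Longrightarrow> x \<in> pobj X (\<phi> j) \<Longrightarrow> h j x \<in> pobj Y j"
  unfolding pro_rep_def by blast

lemma pro_rep_compatible_above:
  assumes X: "proset X" and f: "pro_rep X Y (\<phi>, h)" and "pleq Y j j'"
  obtains a where "pleq X (\<phi> j) a" "pleq X (\<phi> j') a"
    "\<And>i x. pleq X a i \<Longrightarrow> x \<in> pobj X i \<Longrightarrow>
       ptr Y j j' (h j' (ptr X (\<phi> j') i x)) = h j (ptr X (\<phi> j) i x)"
proof -
  obtain a where a: "pleq X (\<phi> j) a" "pleq X (\<phi> j') a"
    "\<forall>y\<in>pobj X a. ptr Y j j' (h j' (ptr X (\<phi> j') a y)) = h j (ptr X (\<phi> j) a y)"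
    using f \<open>pleq Y j j'\<close> unfolding pro_rep_def by (simp only: prod.case) blast
  show ?thesis
  proof (rule that[OF a(1,2)])
    fix i x assume "pleq X a i" "x \<in> pobj X i"
    then show "ptr Y j j' (h j' (ptr X (\<phi> j') i x)) = h j (ptr X (\<phi> j) i x)"
      using a(3)[rule_format, OF proset_ptr_in[OF X]] proset_ptr_comp[OF X] a(1,2) by metis
  qed
qed

lemma pro_eq_above:
  assumes X: "proset X" and "pro_eq X (\<phi>, h) (\<psi>, k)"
  obtains a where "pleq X (\<phi> j) a" "pleq X (\<psi> j) a"
    "\<And>i x. pleq X a i \<Longrightarrow> x \<in> pobj X i \<Longrightarrow> h j (ptr X (\<phi> j) i x) = k j (ptr X (\<psi> j) i x)"
proof -
  obtain a where a: "pleq X (\<phi> j) a" "pleq X (\<psi> j) a"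
    "\<forall>y\<in>pobj X a. h j (ptr X (\<phi> j) a y) = k j (ptr X (\<psi> j) a y)"
    using assms(2) unfolding pro_eq_def by (simp only: prod.case) blast
  show ?thesis
  proof (rule that[OF a(1,2)])
    fix i x assume "pleq X a i" "x \<in> pobj X i"
    then show "h j (ptr X (\<phi> j) i x) = k j (ptr X (\<psi> j) i x)"
      using a(3)[rule_format, OF proset_ptr_in[OF X]] proset_ptr_comp[OF X] a(1,2) by metis
  qed
qed

section \<open>The colocalization and the tower of ideals\<close>

lemma coloc_simps [simp]:
  "pleq (coloc smul s) = (\<le>)" "pobj (coloc smul s) n = UNIV" "ptr (coloc smul s) m n a = smul (s ^ (n - m)) a"
  by (simp_all add: coloc_def)

lemma ideal_tower_simps [simp]:
  "pleq (ideal_tower smul s) = (\<le>)" "pobj (ideal_tower smul s) n = range (smul (s ^ n))"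
  "ptr (ideal_tower smul s) m n x = x"
  by (simp_all add: ideal_tower_def)

lemma pro_iso_coloc_ideal_tower:
  fixes smul :: "'k::comm_ring_1 \<Rightarrow> 'a::comm_ring \<Rightarrow> 'a"
  assumes "module smul" and c: "power_torsion_bound smul s c"
  shows "pro_iso (coloc smul s) (ideal_tower smul s) (\<lambda>n. n, \<lambda>n a. smul (s ^ n) a)"
proof -
  interpret module smul by fact
  have scale_pow: "smul (s ^ i) (smul (s ^ j) a) = smul (s ^ (i + j)) a" for i j a
    by (simp add: power_add)
  define g where "g n y = smul (s ^ c) (SOME a. y = smul (s ^ (n + c)) a)" for n y
  have g: "g n (smul (s ^ (n + c)) b) = smul (s ^ c) b" for n b
  proof -
    have "smul (s ^ (n + c)) b = smul (s ^ (n + c)) (SOME a. smul (s ^ (n + c)) b = smul (s ^ (n + c)) a)"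
      by (rule someI) (rule refl)
    then show ?thesis unfolding g_def by (metis power_torsion_bound_cancel[OF c])
  qed
  have rep_f: "pro_rep (coloc smul s) (ideal_tower smul s) (\<lambda>n. n, \<lambda>n a. smul (s ^ n) a)"
    unfolding pro_rep_def by (auto simp: power_add[symmetric] intro!: exI)
  have rep_g: "pro_rep (ideal_tower smul s) (coloc smul s) (\<lambda>n. n + c, g)"
    unfolding pro_rep_def
  proof (simp, intro allI impI)
    fix j j' :: nat assume "j \<le> j'"
    show "\<exists>i\<ge>j + c. j' + c \<le> i \<and>
        (\<forall>x. smul (s ^ (j' - j)) (g j' (smul (s ^ i) x)) = g j (smul (s ^ i) x))"
    proof (intro exI[of _ "j' + c"] conjI allI)
      fix x
      have "smul (s ^ (j' + c)) x = smul (s ^ (j + c)) (smul (s ^ (j' - j)) x)"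
        using \<open>j \<le> j'\<close> unfolding scale_pow by (simp add: algebra_simps)
      then have "g j (smul (s ^ (j' + c)) x) = smul (s ^ c) (smul (s ^ (j' - j)) x)"
        by (simp only: g)
      then show "smul (s ^ (j' - j)) (g j' (smul (s ^ (j' + c)) x)) = g j (smul (s ^ (j' + c)) x)"
        by (metis g scale_left_commute)
    qed (use \<open>j \<le> j'\<close> in auto)
  qed
  have "pro_eq (coloc smul s) (pro_comp (\<lambda>n. n, \<lambda>n a. smul (s ^ n) a) (\<lambda>n. n + c, g)) pro_id"
    unfolding pro_eq_def pro_comp_def pro_id_def by (auto simp: g intro!: exI[of _ "_ + c"])
  moreover have "pro_eq (ideal_tower smul s) (pro_comp (\<lambda>n. n + c, g) (\<lambda>n. n, \<lambda>n a. smul (s ^ n) a)) pro_id"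
    unfolding pro_eq_def pro_comp_def pro_id_def
    by (auto simp: g[unfolded power_add] power_add intro!: exI[of _ "_ + c"])
  ultimately show ?thesis unfolding pro_iso_def using rep_f rep_g by blast
qed

lemma loc_class_inj_on_ideal:
  fixes smul :: "'k::comm_ring_1 \<Rightarrow> 'a::comm_ring \<Rightarrow> 'a"
  assumes "module smul" and c: "power_torsion_bound smul s c"
    and A: "A \<in> range (smul (s ^ (n + c)))" and B: "B \<in> range (smul (s ^ (n + c)))"
    and AB: "loc_class smul s A 0 = loc_class smul s B 0"
  shows "A = B"
proof -
  interpret module smul by fact
  have scale_pow: "smul (s ^ i) (smul (s ^ j) a) = smul (s ^ (i + j)) a" for i j a
    by (simp add: power_add)
  have "(B, 0) \<in> loc_class smul s A 0"
    using AB unfolding loc_class_def loc_rel_def by auto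
  then obtain k where k: "smul (s ^ k) A = smul (s ^ k) B"
    unfolding loc_class_def loc_rel_def by auto
  obtain a b where ab: "A = smul (s ^ (n + c)) a" "B = smul (s ^ (n + c)) b"
    using A B by blast
  have "smul (s ^ (k + (n + c))) a = smul (s ^ (k + (n + c))) b"
    using k unfolding ab scale_pow .
  then have "smul (s ^ c) a = smul (s ^ c) b"
    by (rule power_torsion_bound_cancel[OF c])
  then have "smul (s ^ n) (smul (s ^ c) a) = smul (s ^ n) (smul (s ^ c) b)" by simp
  then show ?thesis unfolding ab scale_pow .
qed

text \<open>Two maps into the tower that agree in A_s agree at level n + c (where the map to A_s is
  injective), hence at level n, through which level n + c factors.\<close>
lemma pro_mono_ideal_tower_localization:
  fixes smul :: "'k::comm_ring_1 \<Rightarrow> 'a::comm_ring \<Rightarrow> 'a"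
  assumes mod: "module smul" and c: "power_torsion_bound smul s c"
  shows "pro_mono TYPE('w \<times> 'z) (ideal_tower smul s) (const_proset (loc_set smul s))
    (\<lambda>_. 0, \<lambda>_ x. loc_class smul s x 0)"
proof -
  let ?f = "(\<lambda>_::unit. 0::nat, \<lambda>_ x. loc_class smul s x 0)"
  have rep: "pro_rep (ideal_tower smul s) (const_proset (loc_set smul s)) ?f"
    unfolding pro_rep_def const_proset_def loc_set_def by auto
  have "pro_eq W (pu, hu) (pv, hv)"
    if W: "proset W" and u: "pro_rep W (ideal_tower smul s) (pu, hu)"
      and v: "pro_rep W (ideal_tower smul s) (pv, hv)"
      and eq: "pro_eq W (pro_comp (pu, hu) ?f) (pro_comp (pv, hv) ?f)"
    for W :: "('w, 'z) pro_set" and pu hu pv hv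
  proof -
    have eq': "pro_eq W (\<lambda>_::unit. pu 0, \<lambda>_ x. loc_class smul s (hu 0 x) 0) (\<lambda>_::unit. pv 0, \<lambda>_ x. loc_class smul s (hv 0 x) 0)"
      using eq by (simp add: pro_comp_def comp_def)
    have "\<exists>i. pleq W (pu n) i \<and> pleq W (pv n) i \<and>
        (\<forall>x\<in>pobj W i. hu n (ptr W (pu n) i x) = hv n (ptr W (pv n) i x))" for n
    proof -
      define m where "m = n + c"
      obtain a0 where a0: "pleq W (pu 0) a0" "pleq W (pu m) a0"
        "\<And>i x. pleq W a0 i \<Longrightarrow> x \<in> pobj W i \<Longrightarrow> hu m (ptr W (pu m) i x) = hu 0 (ptr W (pu 0) i x)"
        using pro_rep_compatible_above[OF W u, of 0 m] by auto
      obtain a1 where a1: "pleq W (pu n) a1" "pleq W (pu m) a1"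
        "\<And>i x. pleq W a1 i \<Longrightarrow> x \<in> pobj W i \<Longrightarrow> hu m (ptr W (pu m) i x) = hu n (ptr W (pu n) i x)"
        using pro_rep_compatible_above[OF W u, of n m] by (auto simp: m_def)
      obtain b0 where b0: "pleq W (pv 0) b0" "pleq W (pv m) b0"
        "\<And>i x. pleq W b0 i \<Longrightarrow> x \<in> pobj W i \<Longrightarrow> hv m (ptr W (pv m) i x) = hv 0 (ptr W (pv 0) i x)"
        using pro_rep_compatible_above[OF W v, of 0 m] by auto
      obtain b1 where b1: "pleq W (pv n) b1" "pleq W (pv m) b1"
        "\<And>i x. pleq W b1 i \<Longrightarrow> x \<in> pobj W i \<Longrightarrow> hv m (ptr W (pv m) i x) = hv n (ptr W (pv n) i x)"
        using pro_rep_compatible_above[OF W v, of n m] by (auto simp: m_def)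
      obtain e where e: "pleq W (pu 0) e" "pleq W (pv 0) e"
        "\<And>i x. pleq W e i \<Longrightarrow> x \<in> pobj W i \<Longrightarrow>
           loc_class smul s (hu 0 (ptr W (pu 0) i x)) 0 = loc_class smul s (hv 0 (ptr W (pv 0) i x)) 0"
        using pro_eq_above[OF W eq'] by blast
      obtain i where i: "pleq W a0 i" "pleq W a1 i" "pleq W b0 i" "pleq W b1 i" "pleq W e i"
        by (rule proset_finite_upper_bound[OF W, of "{a0, a1, b0, b1, e}"]) (auto intro: that)
      note trans = proset_trans[OF W]
      have "hu n (ptr W (pu n) i x) = hv n (ptr W (pv n) i x)" if x: "x \<in> pobj W i" for x
      proof -
        have "hu m (ptr W (pu m) i x) \<in> range (smul (s ^ (n + c)))"
          using pro_rep_in[OF u proset_ptr_in[OF W trans[OF a0(2) i(1)] x]] by (simp add: m_def)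
        moreover have "hv m (ptr W (pv m) i x) \<in> range (smul (s ^ (n + c)))"
          using pro_rep_in[OF v proset_ptr_in[OF W trans[OF b0(2) i(3)] x]] by (simp add: m_def)
        moreover have "loc_class smul s (hu m (ptr W (pu m) i x)) 0 = loc_class smul s (hv m (ptr W (pv m) i x)) 0"
          using a0(3)[OF i(1) x] b0(3)[OF i(3) x] e(3)[OF i(5) x] by simp
        ultimately have "hu m (ptr W (pu m) i x) = hv m (ptr W (pv m) i x)"
          by (rule loc_class_inj_on_ideal[OF mod c])
        then show ?thesis using a1(3)[OF i(2) x] b1(3)[OF i(4) x] by simp
      qed
      then show ?thesis using trans[OF a1(1) i(2)] trans[OF b1(1) i(4)] by blast
    qed
    then show ?thesis unfolding pro_eq_def by simp
  qed
  then show ?thesis unfolding pro_mono_def using rep by auto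
qed

theorem lemma4:
  fixes smul :: "'k::comm_ring_1 \<Rightarrow> 'a::comm_ring \<Rightarrow> 'a" and s :: 'k
  assumes "noetherian TYPE('k)"
    and "module smul"
    and "\<And>k a b. smul k (a * b) = smul k a * b"
    and "fg_unitization smul"
  shows "pro_iso (coloc smul s) (ideal_tower smul s) (\<lambda>n. n, \<lambda>n a. smul (s ^ n) a)
    \<and> pro_mono TYPE('w \<times> 'z) (ideal_tower smul s) (const_proset (loc_set smul s))
        (\<lambda>_. 0, \<lambda>_ x. loc_class smul s x 0)"
proof -
  interpret nonunital_algebra smul
    by (intro nonunital_algebra.intro nonunital_algebra_axioms.intro assms(2,3))
  obtain c where "power_torsion_bound smul s c"
    using power_torsion_bounded[OF assms(1,4)] .
  then show ?thesis
    using pro_iso_coloc_ideal_tower pro_mono_ideal_tower_localization assms(2) by blast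
qed

end
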